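(* Let $q$ be a prime power, $r\ge 1$ an integer, and $\mathcal{S}$ a $q^r$-divisible spanning set of $q^{r+1}$ points in $\mathrm{PG}(v-1,q)$. Then the number of hyperplanes $H$ with $\mathcal{S}\cap H=\emptyset$ is at least $\frac{q^{v-r-1}-1}{q-1}$.
   Context: $\mathrm{PG}(v-1,q)$ is the projective space of $\mathbb{F}_q^v$; points are $1$-dimensional and hyperplanes $(v-1)$-dimensional subspaces of $\mathbb{F}_q^v$. A set $\mathcal{S}$ of points is spanning if its points span $\mathbb{F}_q^v$, and it is $q^r$-divisible if $|\mathcal{S}\cap H|\equiv|\mathcal{S}|\pmod{q^r}$ for every hyperplane $H$. *)

theory Defs
  imports "HOL-Analysis.Analysis"
begin

text \<open>Projective geometry PG(v-1,q) modelled on F_q^v = 'a ^ 'n, where 'a is a finite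
field (q = CARD('a)) and v = CARD('n). Points and hyperplanes are subspaces.\<close>

definition proj_points :: "('a::field ^ 'n) set set" where
  "proj_points = {W. vec.subspace W \<and> vec.dim W = 1}"

definition proj_hyperplanes :: "('a::field ^ 'n) set set" where
  "proj_hyperplanes = {H. vec.subspace H \<and> vec.dim H = CARD('n) - 1}"

definition spanning_pointset :: "('a::field ^ 'n) set set \<Rightarrow> bool" where
  "spanning_pointset S \<longleftrightarrow> vec.span (\<Union>S) = UNIV"

definition pts_in :: "('a::field ^ 'n) set set \<Rightarrow> ('a ^ 'n) set \<Rightarrow> nat" where
  "pts_in S H = card {P \<in> S. P \<subseteq> H}"

definition divisible_pointset :: "nat \<Rightarrow> ('a::field ^ 'n) set set \<Rightarrow> bool" where
  "divisible_pointset m S \<longleftrightarrow>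
     (\<forall>H \<in> proj_hyperplanes. pts_in S H mod m = card S mod m)"

end

theory Submission
  imports Defs
begin

(* Identify the hyperplanes of PG(v-1,q) with the kernels perp u of the vectors u <> 0 of F_q^v;
   each hyperplane is the kernel of exactly q - 1 of them. Let x(u) count the points of S in
   perp u. Double counting gives the first two moments of x over all u. By divisibility and
   spanning, x(u) is for u <> 0 a multiple of q^r below q^(r+1), so
   (x - q^r)(x - (q-1) q^r) <= 0 unless x(u) = 0, while x(0) = q^(r+1). Summing this quadratic
   against the moments shows that at least q^(v-r-1) - 1 vectors u <> 0 have x(u) = 0. *)

definition dot :: "'a::field ^ 'n \<Rightarrow> 'a ^ 'n \<Rightarrow> 'a" where
  "dot u p = (\<Sum>i\<in>UNIV. u $ i * p $ i)"

lemma dot_comm: "dot u p = dot p u"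
  by (simp add: dot_def mult.commute)

lemma dot_add_left: "dot (u + w) p = dot u p + dot w p"
  by (simp add: dot_def distrib_right sum.distrib)

lemma dot_scale_left: "dot (c *s u) p = c * dot u p"
  by (simp add: dot_def sum_distrib_left mult.assoc)

lemma dot_diff_left: "dot (u - w) p = dot u p - dot w p"
  by (simp add: dot_def left_diff_distrib sum_subtractf)

lemma dot_add_right: "dot u (p + w) = dot u p + dot u w"
  by (simp add: dot_comm[of u] dot_add_left)

lemma dot_scale_right: "dot u (c *s p) = c * dot u p"
  by (simp add: dot_comm[of u] dot_scale_left)

lemma dot_diff_right: "dot u (p - w) = dot u p - dot u w"
  by (simp add: dot_comm[of u] dot_diff_left)

lemma dot_zero_left [simp]: "dot 0 p = 0"
  by (simp add: dot_def)

lemma dot_axis_left: "dot (axis i c) p = c * p $ i"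
  unfolding dot_def axis_def by (simp add: if_distrib[of "\<lambda>x. x * _"] cong: if_cong)

lemma dot_eq_one_exists:
  fixes p :: "'a::field ^ 'n"
  assumes "p \<noteq> 0"
  obtains d where "dot d p = 1"
proof -
  obtain i where "p $ i \<noteq> 0" using assms by (auto simp: vec_eq_iff)
  then show ?thesis by (intro that[of "axis i (inverse (p $ i))"]) (simp add: dot_axis_left)
qed

lemma dot_orthogonal_imp_scalar_multiple:
  fixes p p' :: "'a::field ^ 'n"
  assumes "p \<noteq> 0" and "\<And>u. dot u p = 0 \<Longrightarrow> dot u p' = 0"
  obtains c where "p' = c *s p"
proof -
  obtain d where d: "dot d p = 1" using dot_eq_one_exists[OF assms(1)] .
  have "p' $ j = (dot d p' *s p) $ j" for j
  proof -
    let ?u = "axis j 1 - p $ j *s d"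
    have u: "dot ?u x = x $ j - p $ j * dot d x" for x
      by (simp add: dot_diff_left dot_scale_left dot_axis_left)
    have "dot ?u p = 0" using d u[of p] by simp
    then have "dot ?u p' = 0" by (rule assms(2))
    then show ?thesis using u[of p'] by (simp add: algebra_simps)
  qed
  then show ?thesis by (intro that[of "dot d p'"]) (simp add: vec_eq_iff)
qed

definition perp :: "'a::field ^ 'n \<Rightarrow> ('a ^ 'n) set" where
  "perp u = {p. dot u p = 0}"

lemma subspace_perp: "vec.subspace (perp u)"
  by (simp add: vec.subspace_def perp_def dot_add_right dot_scale_right dot_comm[of u 0])

lemma span_singleton_subset_perp_iff: "vec.span {p} \<subseteq> perp u \<longleftrightarrow> dot u p = 0"
  using vec.span_minimal[OF _ subspace_perp, of "{p}" u] vec.span_base[of p "{p}"]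
  by (auto simp: perp_def)

lemma dim_perp:
  fixes u :: "'a::field ^ 'n"
  assumes "u \<noteq> 0"
  shows "vec.dim (perp u) = CARD('n) - 1"
proof -
  obtain d where d: "dot u d = 1"
    using dot_eq_one_exists[OF assms] by (metis dot_comm)
  have "d \<notin> perp u"
    using d by (simp add: perp_def)
  then have "d \<notin> vec.span (perp u)"
    by (metis subspace_perp vec.span_eq_iff)
  then have dim_insert: "vec.dim (insert d (perp u)) = vec.dim (perp u) + 1"
    by (simp add: vec.dim_insert)
  have "w \<in> vec.span (insert d (perp u))" for w
  proof -
    have "w - dot u w *s d \<in> perp u"
      using d by (simp add: perp_def dot_diff_right dot_scale_right)
    then have "w - dot u w *s d \<in> vec.span (perp u)"
      by (simp add: vec.span_base)
    then show ?thesis by (auto simp: vec.span_breakdown_eq)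
  qed
  then have "vec.span (insert d (perp u)) = UNIV" by blast
  then have "vec.dim (insert d (perp u)) = CARD('n)"
    by (metis vec.dim_span vec_dim_card)
  with dim_insert show ?thesis by simp
qed

lemma perp_in_proj_hyperplanes: "u \<noteq> 0 \<Longrightarrow> perp u \<in> proj_hyperplanes"
  by (simp add: proj_hyperplanes_def subspace_perp dim_perp)

lemma perp_eq_UNIV_iff: "perp u = UNIV \<longleftrightarrow> u = 0"
proof
  assume "perp u = UNIV"
  then have "u $ i = dot u (axis i 1)" "axis i 1 \<in> perp u" for i
    by (simp_all add: dot_comm[of u] dot_axis_left)
  then have "u $ i = 0" for i
    by (simp add: perp_def)
  then show "u = 0" by (simp add: vec_eq_iff)
qed (simp add: perp_def)

lemma perp_eq_imp_scalar_multiple: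
  fixes u w :: "'a::field ^ 'n"
  assumes "u \<noteq> 0" and "perp w = perp u"
  obtains c where "w = c *s u"
proof (rule dot_orthogonal_imp_scalar_multiple[OF assms(1)])
  fix v assume "dot v u = 0"
  then have "v \<in> perp w" using assms(2) by (simp add: perp_def dot_comm)
  then show "dot v w = 0" by (simp add: perp_def dot_comm)
qed (rule that)

lemma proj_pointE:
  assumes "P \<in> proj_points"
  obtains p where "p \<noteq> 0" and "P = vec.span {p}"
proof -
  have sub: "vec.subspace P" and dim: "vec.dim P = 1"
    using assms by (auto simp: proj_points_def)
  obtain B where B: "B \<subseteq> P" "vec.independent B" "P \<subseteq> vec.span B" "card B = vec.dim P"
    using vec.basis_exists by blast
  then obtain p where p: "B = {p}" using dim card_1_singletonE by metis
  show ?thesis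
  proof
    show "p \<noteq> 0" using B(2) p vec.dependent_zero by blast
    have "vec.span B \<subseteq> P" using B(1) sub by (rule vec.span_minimal)
    then show "P = vec.span {p}" using B(3) p by blast
  qed
qed

lemma span_singleton_scale:
  fixes p :: "'a::field ^ 'n"
  assumes "c \<noteq> 0"
  shows "vec.span {c *s p} = vec.span {p}"
  unfolding vec.span_singleton
proof (intro set_eqI iffI)
  fix x assume "x \<in> range (\<lambda>k. k *s (c *s p))"
  then obtain k where "x = k *s (c *s p)" by blast
  then have "x = (k * c) *s p" by (simp add: vec_eq_iff)
  then show "x \<in> range (\<lambda>k. k *s p)" by blast
next
  fix x assume "x \<in> range (\<lambda>k. k *s p)"
  then obtain k where "x = k *s p" by blast
  then have "x = (k / c) *s (c *s p)" using assms by (simp add: vec_eq_iff)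
  then show "x \<in> range (\<lambda>k. k *s (c *s p))" by blast
qed

lemma card_field_ge_two: "2 \<le> CARD('a::{field,finite})"
  using card_mono[of UNIV "{0::'a, 1}"] by simp

lemma card_subspace_eq_card_field_mult_card_kernel:
  fixes D :: "('a::{field,finite} ^ 'n) set" and g :: "'a ^ 'n \<Rightarrow> 'a"
  assumes D: "vec.subspace D"
    and g_add: "\<And>x y. g (x + y) = g x + g y" and g_scale: "\<And>c x. g (c *s x) = c * g x"
    and d: "d \<in> D" "g d = 1"
  shows "card D = CARD('a) * card {u \<in> D. g u = 0}"
proof -
  define F where "F c = {u \<in> D. g u = c}" for c
  have g_diff: "g (x - y) = g x - g y" for x y
  proof -
    have "g (x - y) = g (x + (- 1) *s y)"
      by (rule arg_cong[where f = g]) (simp add: vec_eq_iff)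
    also have "\<dots> = g x - g y"
      unfolding g_add g_scale by simp
    finally show ?thesis .
  qed
  have F_translate: "F c = (\<lambda>u. u + c *s d) ` F 0" for c
  proof (intro set_eqI iffI)
    fix w assume w: "w \<in> F c"
    have "w - c *s d \<in> D"
      using w d by (simp add: F_def D vec.subspace_diff vec.subspace_scale)
    moreover have "g (w - c *s d) = 0"
      using w d by (simp add: F_def g_diff g_scale)
    ultimately have "w - c *s d \<in> F 0" by (simp add: F_def)
    moreover have "w = (w - c *s d) + c *s d" by simp
    ultimately show "w \<in> (\<lambda>u. u + c *s d) ` F 0" by blast
  next
    fix w assume "w \<in> (\<lambda>u. u + c *s d) ` F 0"
    then obtain u where "u \<in> D" "g u = 0" "w = u + c *s d" by (auto simp: F_def)
    then show "w \<in> F c"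
      using d by (simp add: F_def g_add g_scale D vec.subspace_add vec.subspace_scale)
  qed
  have "D = (\<Union>c. F c)"
    by (auto simp: F_def)
  then have "card D = card (\<Union>c. F c)"
    by simp
  also have "\<dots> = (\<Sum>c\<in>UNIV. card (F c))"
    by (rule card_UN_disjoint) (auto simp: F_def)
  also have "\<dots> = (\<Sum>c\<in>(UNIV :: 'a set). card (F 0))"
  proof (rule sum.cong[OF refl])
    fix c
    have "inj_on (\<lambda>u. u + c *s d) (F 0)" by (simp add: inj_on_def)
    then show "card (F c) = card (F 0)" by (subst F_translate) (rule card_image)
  qed
  finally show ?thesis by (simp add: F_def)
qed

lemma card_perp:
  fixes p :: "'a::{field,finite} ^ 'n"
  assumes "p \<noteq> 0"
  shows "card (perp p) = CARD('a) ^ (CARD('n) - 1)"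
proof -
  obtain d where d: "dot p d = 1"
    using dot_eq_one_exists[OF assms] by (metis dot_comm)
  have "CARD('a) * CARD('a) ^ (CARD('n) - 1) = CARD('a ^ 'n)"
    by (simp add: power_Suc[symmetric])
  also have "\<dots> = CARD('a) * card {u \<in> UNIV. dot p u = 0}"
    by (rule card_subspace_eq_card_field_mult_card_kernel[where d = d])
      (simp_all add: vec.subspace_UNIV dot_add_right dot_scale_right d)
  finally show ?thesis by (simp add: perp_def)
qed

lemma card_perp_inter_perp:
  fixes p p' :: "'a::{field,finite} ^ 'n"
  assumes "p \<noteq> 0" and not_multiple: "\<And>c. p' \<noteq> c *s p"
  shows "card (perp p \<inter> perp p') = CARD('a) ^ (CARD('n) - 2)"
proof -
  have "\<not> (\<forall>u. dot u p = 0 \<longrightarrow> dot u p' = 0)"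
    using dot_orthogonal_imp_scalar_multiple[OF assms(1)] not_multiple by blast
  then obtain w where w: "dot w p = 0" "dot w p' \<noteq> 0" by blast
  define d where "d = inverse (dot w p') *s w"
  have d: "d \<in> perp p" "dot p' d = 1"
    using w by (simp_all add: d_def perp_def dot_scale_right dot_comm[of p w] dot_comm[of p' w])
  have "card (perp p) = CARD('a) * card {u \<in> perp p. dot p' u = 0}"
    by (rule card_subspace_eq_card_field_mult_card_kernel[where g = "dot p'" and d = d])
      (simp_all add: subspace_perp dot_add_right dot_scale_right d)
  moreover have "{u \<in> perp p. dot p' u = 0} = perp p \<inter> perp p'"
    by (auto simp: perp_def)
  ultimately have count: "CARD('a) ^ (CARD('n) - 1) = CARD('a) * card (perp p \<inter> perp p')"
    using card_perp[OF assms(1)] by simp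
  have "CARD('n) - 1 \<noteq> 0"
  proof
    assume "CARD('n) - 1 = 0"
    then have "CARD('a) * card (perp p \<inter> perp p') = 1" using count by simp
    then show False using card_field_ge_two[where 'a = 'a] by simp
  qed
  then have "CARD('n) - 1 = Suc (CARD('n) - 2)" by linarith
  then have "CARD('a) ^ (CARD('n) - 1) = CARD('a) * CARD('a) ^ (CARD('n) - 2)"
    by (simp only: power_Suc)
  with count show ?thesis by simp
qed

lemma forms_vanishing_on_span_singleton: "{u. vec.span {p} \<subseteq> perp u} = perp p"
  unfolding span_singleton_subset_perp_iff by (simp add: perp_def dot_comm)

lemma card_forms_vanishing_on_point:
  fixes P :: "('a::{field,finite} ^ 'n) set"
  assumes "P \<in> proj_points"
  shows "card {u. P \<subseteq> perp u} = CARD('a) ^ (CARD('n) - 1)"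
proof -
  obtain p where "p \<noteq> 0" "P = vec.span {p}" using proj_pointE[OF assms] .
  then show ?thesis by (simp add: forms_vanishing_on_span_singleton card_perp)
qed

lemma card_forms_vanishing_on_two_points:
  fixes P P' :: "('a::{field,finite} ^ 'n) set"
  assumes "P \<in> proj_points" "P' \<in> proj_points" "P \<noteq> P'"
  shows "card {u. P \<subseteq> perp u \<and> P' \<subseteq> perp u} = CARD('a) ^ (CARD('n) - 2)"
proof -
  obtain p where p: "p \<noteq> 0" "P = vec.span {p}" using proj_pointE[OF assms(1)] .
  obtain p' where p': "p' \<noteq> 0" "P' = vec.span {p'}" using proj_pointE[OF assms(2)] .
  have "p' \<noteq> c *s p" for c
  proof
    assume "p' = c *s p"
    moreover from this have "c \<noteq> 0" using p'(1) by auto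
    ultimately show False using p p' assms(3) by (simp add: span_singleton_scale)
  qed
  then have "card (perp p \<inter> perp p') = CARD('a) ^ (CARD('n) - 2)"
    using card_perp_inter_perp[OF p(1)] by blast
  moreover have "{u. P \<subseteq> perp u \<and> P' \<subseteq> perp u} = perp p \<inter> perp p'"
    using p(2) p'(2) forms_vanishing_on_span_singleton by blast
  ultimately show ?thesis by simp
qed

lemma pts_in_eq_sum_of_bool:
  fixes S :: "('a::{field,finite} ^ 'n) set set"
  shows "pts_in S H = (\<Sum>P\<in>S. of_bool (P \<subseteq> H))"
  by (simp add: pts_in_def Int_def)

lemma sum_pts_in_perp:
  fixes S :: "('a::{field,finite} ^ 'n) set set"
  assumes "S \<subseteq> proj_points"
  shows "(\<Sum>u\<in>UNIV. pts_in S (perp u)) = card S * CARD('a) ^ (CARD('n) - 1)"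
proof -
  have "(\<Sum>u\<in>UNIV. pts_in S (perp u)) = (\<Sum>P\<in>S. \<Sum>u\<in>UNIV. of_bool (P \<subseteq> perp u))"
    unfolding pts_in_eq_sum_of_bool by (rule sum.swap)
  also have "\<dots> = (\<Sum>P\<in>S. card {u. P \<subseteq> perp u})"
    by simp
  also have "\<dots> = (\<Sum>P\<in>S. CARD('a) ^ (CARD('n) - 1))"
    using assms by (intro sum.cong) (auto simp: card_forms_vanishing_on_point)
  finally show ?thesis by simp
qed

lemma sum_pts_in_perp_squared:
  fixes S :: "('a::{field,finite} ^ 'n) set set"
  assumes "S \<subseteq> proj_points"
  shows "(\<Sum>u\<in>UNIV. pts_in S (perp u) ^ 2)
    = card S * (CARD('a) ^ (CARD('n) - 1) + (card S - 1) * CARD('a) ^ (CARD('n) - 2))"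
proof -
  let ?both = "\<lambda>P P' u. of_bool (P \<subseteq> perp u \<and> P' \<subseteq> perp u) :: nat"
  have "(\<Sum>u\<in>UNIV. pts_in S (perp u) ^ 2) = (\<Sum>u\<in>UNIV. \<Sum>P\<in>S. \<Sum>P'\<in>S. ?both P P' u)"
    unfolding pts_in_eq_sum_of_bool power2_eq_square sum_product of_bool_conj ..
  also have "\<dots> = (\<Sum>P\<in>S. \<Sum>P'\<in>S. \<Sum>u\<in>UNIV. ?both P P' u)"
    by (subst sum.swap) (simp only: sum.swap[of _ UNIV])
  also have "\<dots> = (\<Sum>P\<in>S. \<Sum>P'\<in>S. card {u. P \<subseteq> perp u \<and> P' \<subseteq> perp u})"
    by simp
  also have "\<dots> = (\<Sum>P\<in>S. CARD('a) ^ (CARD('n) - 1) + (card S - 1) * CARD('a) ^ (CARD('n) - 2))"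
  proof (rule sum.cong[OF refl])
    fix P assume P: "P \<in> S"
    have "(\<Sum>P'\<in>S. card {u. P \<subseteq> perp u \<and> P' \<subseteq> perp u})
        = card {u. P \<subseteq> perp u} + (\<Sum>P'\<in>S - {P}. card {u. P \<subseteq> perp u \<and> P' \<subseteq> perp u})"
      using P by (simp add: sum.remove)
    also have "\<dots> = CARD('a) ^ (CARD('n) - 1) + (\<Sum>P'\<in>S - {P}. CARD('a) ^ (CARD('n) - 2))"
    proof (intro arg_cong2[where f = "(+)"] sum.cong refl)
      show "card {u. P \<subseteq> perp u} = CARD('a) ^ (CARD('n) - 1)"
        using P assms by (blast intro: card_forms_vanishing_on_point)
      show "card {u. P \<subseteq> perp u \<and> P' \<subseteq> perp u} = CARD('a) ^ (CARD('n) - 2)"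
        if "P' \<in> S - {P}" for P'
        using P that assms by (blast intro: card_forms_vanishing_on_two_points)
    qed
    finally show "(\<Sum>P'\<in>S. card {u. P \<subseteq> perp u \<and> P' \<subseteq> perp u})
        = CARD('a) ^ (CARD('n) - 1) + (card S - 1) * CARD('a) ^ (CARD('n) - 2)"
      using P by simp
  qed
  finally show ?thesis by simp
qed

lemma pts_in_perp_eq_card_iff:
  fixes S :: "('a::{field,finite} ^ 'n) set set"
  assumes "spanning_pointset S"
  shows "pts_in S (perp u) = card S \<longleftrightarrow> u = 0"
proof
  assume "pts_in S (perp u) = card S"
  then have "{P \<in> S. P \<subseteq> perp u} = S"
    unfolding pts_in_def by (intro card_subset_eq) auto
  then have "\<Union>S \<subseteq> perp u" by blast
  then have "vec.span (\<Union>S) \<subseteq> perp u"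
    using subspace_perp by (rule vec.span_minimal)
  then show "u = 0"
    using assms by (simp add: spanning_pointset_def perp_eq_UNIV_iff[symmetric] top_unique)
qed (simp add: pts_in_def perp_eq_UNIV_iff[THEN iffD2])

lemma quadratic_le_at_multiples:
  fixes m q y :: nat
  assumes "m dvd y" and "y \<le> q * m"
  shows "(real y - real m) * (real y - (real q - 1) * real m)
    \<le> (if y = 0 \<or> y = q * m then (real q - 1) * (real m) ^ 2 else 0)"
proof -
  obtain k where y: "y = m * k" using assms(1) by blast
  consider "y = 0" | "y = q * m" | "y \<noteq> 0" "y \<noteq> q * m" by blast
  then show ?thesis
  proof cases
    case 3
    then have "1 \<le> k" "k + 1 \<le> q"
      using assms(2) y by (auto simp: mult.commute[of m] intro: Suc_leI)
    then have "(real k - 1) * (real k - (real q - 1)) \<le> 0"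
      by (intro mult_nonneg_nonpos) auto
    then have "real m ^ 2 * ((real k - 1) * (real k - (real q - 1))) \<le> 0"
      by (simp add: mult_nonneg_nonpos)
    then show ?thesis
      using 3 y by (simp add: power2_eq_square algebra_simps)
  qed (auto simp: power2_eq_square algebra_simps)
qed

lemma sum_quadratic_pts_in_perp:
  fixes S :: "('a::{field,finite} ^ 'n) set set" and q r :: nat
  assumes q: "q = CARD('a)" and pts: "S \<subseteq> proj_points"
    and size: "card S = q ^ (r + 1)" and dim: "2 \<le> CARD('n)"
  shows "(\<Sum>u\<in>UNIV. (real (pts_in S (perp u)) - real q ^ r)
      * (real (pts_in S (perp u)) - (real q - 1) * real q ^ r))
    = (real q - 1) * real q ^ (r + 1) * real q ^ (CARD('n) - 2)"
proof -
  obtain m where v: "CARD('n) = m + 2" using dim le_Suc_ex by (metis add.commute)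
  define Q where "Q = real q"
  define x where "x u = real (pts_in S (perp u))" for u
  have q_pos: "q \<ge> 1" using q card_field_ge_two[where 'a = 'a] by simp
  have sum1: "(\<Sum>u\<in>UNIV. x u) = Q ^ (r + 1) * Q ^ (m + 1)"
    using arg_cong[OF sum_pts_in_perp[OF pts], of real]
    by (simp add: x_def Q_def q size v)
  have sum2: "(\<Sum>u\<in>UNIV. x u ^ 2) = Q ^ (r + 1) * (Q ^ (m + 1) + (Q ^ (r + 1) - 1) * Q ^ m)"
    using arg_cong[OF sum_pts_in_perp_squared[OF pts], of real] q_pos
    by (simp add: x_def Q_def q size v of_nat_diff)
  have card_forms: "real CARD('a ^ 'n) = Q ^ (m + 2)"
    by (simp add: Q_def q v)
  have "(\<Sum>u\<in>UNIV. (x u - Q ^ r) * (x u - (Q - 1) * Q ^ r))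
      = (\<Sum>u\<in>UNIV. x u ^ 2) - Q ^ (r + 1) * (\<Sum>u\<in>UNIV. x u)
        + real CARD('a ^ 'n) * ((Q - 1) * Q ^ r * Q ^ r)"
    by (simp add: sum.distrib sum_subtractf sum_distrib_left sum_distrib_right power2_eq_square
        algebra_simps)
  also have "\<dots> = (Q - 1) * Q ^ (r + 1) * Q ^ m"
    unfolding sum1 sum2 card_forms by (simp add: algebra_simps power_add)
  finally show ?thesis by (simp add: x_def Q_def v)
qed

lemma quadratic_pts_in_perp_le:
  fixes S :: "('a::{field,finite} ^ 'n) set set" and q r :: nat
  assumes span: "spanning_pointset S"
    and div: "divisible_pointset (q ^ r) S" and size: "card S = q ^ (r + 1)"
  shows "(real (pts_in S (perp u)) - real q ^ r) * (real (pts_in S (perp u)) - (real q - 1) * real q ^ r)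
    \<le> (if pts_in S (perp u) = 0 \<or> u = 0 then (real q - 1) * (real q ^ r) ^ 2 else 0)"
proof -
  define x where "x = pts_in S (perp u)"
  have card_S: "card S = q * q ^ r" by (simp add: size)
  have x_eq_card_iff: "x = q * q ^ r \<longleftrightarrow> u = 0"
    using pts_in_perp_eq_card_iff[OF span] card_S by (simp add: x_def)
  have "q ^ r dvd x"
  proof (cases "u = 0")
    case False
    then show ?thesis
      using div perp_in_proj_hyperplanes[OF False] card_S
      by (simp add: divisible_pointset_def x_def mod_0_imp_dvd)
  qed (use x_eq_card_iff in simp)
  moreover have "x \<le> q * q ^ r"
    unfolding x_def pts_in_def card_S[symmetric] by (rule card_mono) auto
  ultimately have "(real x - real (q ^ r)) * (real x - (real q - 1) * real (q ^ r))
      \<le> (if x = 0 \<or> x = q * q ^ r then (real q - 1) * (real (q ^ r)) ^ 2 else 0)"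
    by (rule quadratic_le_at_multiples)
  then show ?thesis
    unfolding x_eq_card_iff by (simp only: x_def of_nat_power)
qed

lemma card_forms_avoiding_ge:
  fixes S :: "('a::{field,finite} ^ 'n) set set" and q r :: nat
  assumes q: "q = CARD('a)" and pts: "S \<subseteq> proj_points" and span: "spanning_pointset S"
    and div: "divisible_pointset (q ^ r) S" and size: "card S = q ^ (r + 1)"
    and dim: "r + 2 \<le> CARD('n)"
  shows "real q ^ (CARD('n) - r - 1) \<le> real (card {u. u \<noteq> 0 \<and> pts_in S (perp u) = 0}) + 1"
proof -
  define x where "x u = real (pts_in S (perp u))" for u
  define Z where "Z = {u. u \<noteq> 0 \<and> pts_in S (perp u) = 0}"
  define m where "m = real q ^ r"
  have exponent: "r + 1 + (CARD('n) - 2) = r + (r + (CARD('n) - r - 1))"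
    using dim by simp
  have "(real q - 1) * m * (m * real q ^ (CARD('n) - r - 1))
      = (real q - 1) * (real q ^ (r + 1) * real q ^ (CARD('n) - 2))"
    by (simp only: m_def power_add[symmetric] exponent mult.assoc)
  also have "\<dots> = (\<Sum>u\<in>UNIV. (x u - m) * (x u - (real q - 1) * m))"
    using sum_quadratic_pts_in_perp[OF q pts size] dim by (simp add: x_def m_def mult.assoc)
  also have "\<dots> \<le> (\<Sum>u\<in>UNIV. if pts_in S (perp u) = 0 \<or> u = 0 then (real q - 1) * m ^ 2 else 0)"
    unfolding x_def m_def by (rule sum_mono) (rule quadratic_pts_in_perp_le[OF span div size])
  also have "\<dots> = (real q - 1) * m ^ 2 * real (card (insert 0 Z))"
  proof -
    have "{u. pts_in S (perp u) = 0 \<or> u = 0} = insert 0 Z" by (auto simp: Z_def)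
    then show ?thesis by (simp add: sum.If_cases)
  qed
  also have "card (insert 0 Z) = card Z + 1"
    by (simp add: Z_def)
  finally have "(real q - 1) * m * (m * real q ^ (CARD('n) - r - 1))
      \<le> (real q - 1) * m * (m * (real (card Z) + 1))"
    by (simp add: power2_eq_square algebra_simps)
  moreover have "(real q - 1) * m > 0"
    using q card_field_ge_two[where 'a = 'a] by (simp add: m_def)
  ultimately have "m * real q ^ (CARD('n) - r - 1) \<le> m * (real (card Z) + 1)"
    by (rule mult_left_le_imp_le)
  moreover have "m > 0"
    using q by (simp add: m_def)
  ultimately show ?thesis
    unfolding Z_def by (rule mult_left_le_imp_le)
qed

lemma card_forms_avoiding_le:
  fixes S :: "('a::{field,finite} ^ 'n) set set"
  shows "card {u. u \<noteq> 0 \<and> pts_in S (perp u) = 0}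
    \<le> card {H \<in> proj_hyperplanes. \<forall>P \<in> S. \<not> P \<subseteq> H} * (CARD('a) - 1)"
proof -
  define Z where "Z = {u. u \<noteq> 0 \<and> pts_in S (perp u) = 0}"
  define T where "T = {H \<in> proj_hyperplanes. \<forall>P \<in> S. \<not> P \<subseteq> H}"
  have "perp ` Z \<subseteq> T"
    by (auto simp: Z_def T_def pts_in_def perp_in_proj_hyperplanes)
  have fibre: "card {u \<in> Z. perp u = H} \<le> CARD('a) - 1" if "H \<in> perp ` Z" for H
  proof -
    obtain w where w: "w \<in> Z" "H = perp w" using \<open>H \<in> perp ` Z\<close> by blast
    have "{u \<in> Z. perp u = H} \<subseteq> (\<lambda>c. c *s w) ` (UNIV - {0})"
    proof
      fix u assume u: "u \<in> {u \<in> Z. perp u = H}"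
      obtain c where c: "u = c *s w"
        using perp_eq_imp_scalar_multiple[of w u] u w by (auto simp: Z_def)
      then have "c \<noteq> 0" using u by (auto simp: Z_def)
      with c show "u \<in> (\<lambda>c. c *s w) ` (UNIV - {0})" by blast
    qed
    then have "card {u \<in> Z. perp u = H} \<le> card ((\<lambda>c. c *s w) ` (UNIV - {0 :: 'a}))"
      by (intro card_mono) auto
    also have "\<dots> \<le> CARD('a) - 1"
      using card_image_le[of "UNIV - {0 :: 'a}" "\<lambda>c. c *s w"] by (simp add: card_Diff_singleton)
    finally show ?thesis .
  qed
  have "card Z = (\<Sum>H\<in>perp ` Z. card {u \<in> Z. perp u = H})"
    unfolding card_eq_sum by (rule sum.image_gen) simp
  also have "\<dots> \<le> card (perp ` Z) * (CARD('a) - 1)"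
    using sum_bounded_above[OF fibre] by simp
  also have "\<dots> \<le> card T * (CARD('a) - 1)"
    using \<open>perp ` Z \<subseteq> T\<close> by (simp add: card_mono)
  finally show ?thesis by (simp add: Z_def T_def)
qed

theorem mainTheorem4:
  fixes S :: "('a::{field,finite} ^ 'n) set set"
    and q r :: nat
  assumes q_def: "q = CARD('a)"
    and r: "r \<ge> 1"
    and pts: "S \<subseteq> proj_points"
    and span: "spanning_pointset S"
    and div: "divisible_pointset (q ^ r) S"
    and size: "card S = q ^ (r + 1)"
  shows "real (card {H \<in> proj_hyperplanes. \<forall>P \<in> S. \<not> P \<subseteq> H})
           \<ge> (real q ^ (CARD('n) - r - 1) - 1) / (real q - 1)"
proof (cases "r + 2 \<le> CARD('n)")
  case True
  have q: "real q \<ge> 2"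
    using q_def card_field_ge_two[where 'a = 'a] by simp
  have "real q ^ (CARD('n) - r - 1) - 1 \<le> real (card {u. u \<noteq> 0 \<and> pts_in S (perp u) = 0})"
    using card_forms_avoiding_ge[OF q_def pts span div size True] by simp
  also have "\<dots> \<le> real (card {H \<in> proj_hyperplanes. \<forall>P \<in> S. \<not> P \<subseteq> H} * (q - 1))"
    using card_forms_avoiding_le[of S] q_def by (simp only: of_nat_le_iff)
  also have "\<dots> = real (card {H \<in> proj_hyperplanes. \<forall>P \<in> S. \<not> P \<subseteq> H}) * (real q - 1)"
    using q by (simp add: of_nat_diff)
  finally show ?thesis
    using q by (simp add: divide_le_eq)
next
  case False
  then show ?thesis by simp
qed

end
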